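(* Let $R$ be a commutative ring and $e\in R$ an idempotent. Then $R$ is locally stable if and only if both $eRe$ and $(1-e)R(1-e)$ are locally stable.
   Context: All rings are commutative with identity ($eRe=eR$ is a ring with identity $e$). A ring $S$ has stable range 1 if whenever $aS+bS=S$ there is $y\in S$ with $a+by$ a unit. $S$ is locally stable if whenever $a,b\in S$ with $aS+bS=S$ there is $y\in S$ such that $S/(a+by)S$ has stable range 1. *)

theory Defs
  imports "HOL-Algebra.Algebra"
begin

definition stable_range_one :: "('a, 'b) ring_scheme \<Rightarrow> bool" where
  "stable_range_one S \<longleftrightarrow>
     (\<forall>a \<in> carrier S. \<forall>b \<in> carrier S.
        PIdl\<^bsub>S\<^esub> a <+>\<^bsub>S\<^esub> PIdl\<^bsub>S\<^esub> b = carrier S \<longrightarrow>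
        (\<exists>y \<in> carrier S. a \<oplus>\<^bsub>S\<^esub> (b \<otimes>\<^bsub>S\<^esub> y) \<in> Units S))"

definition locally_stable :: "('a, 'b) ring_scheme \<Rightarrow> bool" where
  "locally_stable S \<longleftrightarrow>
     (\<forall>a \<in> carrier S. \<forall>b \<in> carrier S.
        PIdl\<^bsub>S\<^esub> a <+>\<^bsub>S\<^esub> PIdl\<^bsub>S\<^esub> b = carrier S \<longrightarrow>
        (\<exists>y \<in> carrier S.
           stable_range_one (S Quot (PIdl\<^bsub>S\<^esub> (a \<oplus>\<^bsub>S\<^esub> (b \<otimes>\<^bsub>S\<^esub> y))))))"

definition corner :: "('a, 'b) ring_scheme \<Rightarrow> 'a \<Rightarrow> ('a, 'b) ring_scheme" where
  "corner R e = R\<lparr>carrier := {e \<otimes>\<^bsub>R\<^esub> x \<otimes>\<^bsub>R\<^esub> e | x. x \<in> carrier R}, one := e\<rparr>"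

end

theory Submission
  imports Defs
begin

text \<open>Put \<open>f = 1 - e\<close>, so that \<open>R\<close> is the product of the corners \<open>eR\<close> and \<open>fR\<close>.
  Stable range one of \<open>R/cR\<close> can be phrased inside \<open>R\<close> through congruences \<open>x \<equiv> 1 (mod c)\<close>,
  and such a congruence holds in \<open>R\<close> iff \<open>ex \<equiv> e (mod ec)\<close> in \<open>eR\<close> and \<open>fx \<equiv> f (mod fc)\<close> in \<open>fR\<close>.
  Hence \<open>R/cR\<close> has stable range one iff both \<open>eR/ecR\<close> and \<open>fR/fcR\<close> do, and comaximal pairs
  split in the same way. To pass from \<open>eR\<close> to \<open>R\<close>, elements \<open>a\<close> of \<open>eR\<close> are lifted to \<open>a + f\<close>,
  which turns the identity \<open>e\<close> of \<open>eR\<close> into the identity \<open>1 = e + f\<close> of \<open>R\<close>.\<close>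

text \<open>\<open>congruent_one S c x\<close> says \<open>x \<equiv> 1 (mod cS)\<close>, and \<open>stable_range_one_mod S c\<close> says that
  \<open>S/cS\<close> has stable range one, stated inside \<open>S\<close> (see \<open>stable_range_one_quotient_iff\<close>).\<close>

definition congruent_one :: "('a, 'b) ring_scheme \<Rightarrow> 'a \<Rightarrow> 'a \<Rightarrow> bool" where
  "congruent_one S c x \<longleftrightarrow> (\<exists>k\<in>carrier S. x = \<one>\<^bsub>S\<^esub> \<oplus>\<^bsub>S\<^esub> k \<otimes>\<^bsub>S\<^esub> c)"

definition stable_range_one_mod :: "('a, 'b) ring_scheme \<Rightarrow> 'a \<Rightarrow> bool" where
  "stable_range_one_mod S c \<longleftrightarrow>
     (\<forall>a\<in>carrier S. \<forall>b\<in>carrier S.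
        (\<exists>s\<in>carrier S. \<exists>t\<in>carrier S. congruent_one S c (s \<otimes>\<^bsub>S\<^esub> a \<oplus>\<^bsub>S\<^esub> t \<otimes>\<^bsub>S\<^esub> b)) \<longrightarrow>
        (\<exists>y\<in>carrier S. \<exists>u\<in>carrier S. congruent_one S c ((a \<oplus>\<^bsub>S\<^esub> b \<otimes>\<^bsub>S\<^esub> y) \<otimes>\<^bsub>S\<^esub> u)))"

lemma (in ring) congruent_one_one: "c \<in> carrier R \<Longrightarrow> congruent_one R c \<one>"
  unfolding congruent_one_def by (intro bexI[of _ \<zero>]) simp_all

lemma (in ring) congruent_one_ring_hom:
  assumes h: "h \<in> ring_hom R S" and "c \<in> carrier R" "x \<in> carrier R"
    and "congruent_one R c x"
  shows "congruent_one S (h c) (h x)"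
proof -
  obtain k where k: "k \<in> carrier R" "x = \<one> \<oplus> k \<otimes> c"
    using assms(4) unfolding congruent_one_def by blast
  then have "h x = \<one>\<^bsub>S\<^esub> \<oplus>\<^bsub>S\<^esub> h k \<otimes>\<^bsub>S\<^esub> h c"
    using assms(2) ring_hom_memE[OF h] by (simp add: ring_hom_add[OF h])
  then show ?thesis
    unfolding congruent_one_def using ring_hom_closed[OF h k(1)] by blast
qed

lemma stable_range_one_modD:
  assumes "stable_range_one_mod S c" "a \<in> carrier S" "b \<in> carrier S"
    and "\<exists>s\<in>carrier S. \<exists>t\<in>carrier S. congruent_one S c (s \<otimes>\<^bsub>S\<^esub> a \<oplus>\<^bsub>S\<^esub> t \<otimes>\<^bsub>S\<^esub> b)"
  shows "\<exists>y\<in>carrier S. \<exists>u\<in>carrier S. congruent_one S c ((a \<oplus>\<^bsub>S\<^esub> b \<otimes>\<^bsub>S\<^esub> y) \<otimes>\<^bsub>S\<^esub> u)"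
  using assms unfolding stable_range_one_mod_def by blast

context cring
begin

lemma comaximal_iff:
  assumes "a \<in> carrier R" "b \<in> carrier R"
  shows "PIdl a <+> PIdl b = carrier R \<longleftrightarrow> (\<exists>s\<in>carrier R. \<exists>t\<in>carrier R. s \<otimes> a \<oplus> t \<otimes> b = \<one>)"
proof
  assume "PIdl a <+> PIdl b = carrier R"
  then have "\<one> \<in> PIdl a <+> PIdl b" by simp
  then show "\<exists>s\<in>carrier R. \<exists>t\<in>carrier R. s \<otimes> a \<oplus> t \<otimes> b = \<one>"
    unfolding set_add_def' cgenideal_def by force
next
  assume "\<exists>s\<in>carrier R. \<exists>t\<in>carrier R. s \<otimes> a \<oplus> t \<otimes> b = \<one>"
  then have "\<one> \<in> PIdl a <+> PIdl b"
    unfolding set_add_def' cgenideal_def by force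
  moreover have "ideal (PIdl a <+> PIdl b) R"
    using assms by (intro add_ideals cgenideal_ideal)
  ultimately show "PIdl a <+> PIdl b = carrier R"
    using ideal.one_imp_carrier by blast
qed

lemma Units_iff_right_inverse:
  "x \<in> Units R \<longleftrightarrow> x \<in> carrier R \<and> (\<exists>u\<in>carrier R. x \<otimes> u = \<one>)"
  unfolding Units_def by (auto simp: m_comm)

end

lemma (in ring_hom_cring) stable_range_one_iff_surjective:
  assumes surj: "h ` carrier R = carrier S"
  shows "stable_range_one S \<longleftrightarrow>
    (\<forall>a\<in>carrier R. \<forall>b\<in>carrier R.
       (\<exists>s\<in>carrier R. \<exists>t\<in>carrier R. h (s \<otimes> a \<oplus> t \<otimes> b) = \<one>\<^bsub>S\<^esub>) \<longrightarrow>
       (\<exists>y\<in>carrier R. \<exists>u\<in>carrier R. h ((a \<oplus> b \<otimes> y) \<otimes> u) = \<one>\<^bsub>S\<^esub>))"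
proof -
  have ex_image: "(\<exists>z\<in>carrier S. P z) \<longleftrightarrow> (\<exists>x\<in>carrier R. P (h x))" for P
    unfolding surj[symmetric] by blast
  have all_image: "(\<forall>z\<in>carrier S. P z) \<longleftrightarrow> (\<forall>x\<in>carrier R. P (h x))" for P
    unfolding surj[symmetric] by blast
  have comaximal_image: "PIdl\<^bsub>S\<^esub> h a <+>\<^bsub>S\<^esub> PIdl\<^bsub>S\<^esub> h b = carrier S \<longleftrightarrow>
      (\<exists>s\<in>carrier R. \<exists>t\<in>carrier R. h (s \<otimes> a \<oplus> t \<otimes> b) = \<one>\<^bsub>S\<^esub>)"
    if "a \<in> carrier R" "b \<in> carrier R" for a b
    using that by (simp add: S.comaximal_iff ex_image)
  have unit_image: "h a \<oplus>\<^bsub>S\<^esub> h b \<otimes>\<^bsub>S\<^esub> h y \<in> Units S \<longleftrightarrow>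
      (\<exists>u\<in>carrier R. h ((a \<oplus> b \<otimes> y) \<otimes> u) = \<one>\<^bsub>S\<^esub>)"
    if "a \<in> carrier R" "b \<in> carrier R" "y \<in> carrier R" for a b y
    using that by (simp add: S.Units_iff_right_inverse ex_image)
  show ?thesis
    unfolding stable_range_one_def all_image ex_image
    by (simp add: comaximal_image unit_image)
qed

context cring
begin

lemma rcos_eq_one_iff_congruent_one:
  assumes "c \<in> carrier R" "x \<in> carrier R"
  shows "PIdl c +> x = PIdl c +> \<one> \<longleftrightarrow> congruent_one R c x"
proof -
  have "x \<ominus> \<one> = k \<otimes> c \<longleftrightarrow> x = \<one> \<oplus> k \<otimes> c" if "k \<in> carrier R" for k
  proof
    assume "x \<ominus> \<one> = k \<otimes> c"
    moreover have "x = \<one> \<oplus> (x \<ominus> \<one>)" using assms by algebra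
    ultimately show "x = \<one> \<oplus> k \<otimes> c" by simp
  next
    assume "x = \<one> \<oplus> k \<otimes> c"
    then show "x \<ominus> \<one> = k \<otimes> c" using that assms by algebra
  qed
  then show ?thesis
    using assms quotient_eq_iff_same_a_r_cos[OF cgenideal_ideal[OF assms(1)], of x \<one>]
    by (auto simp: congruent_one_def cgenideal_def)
qed

lemma stable_range_one_quotient_iff:
  assumes c: "c \<in> carrier R"
  shows "stable_range_one (R Quot PIdl c) \<longleftrightarrow> stable_range_one_mod R c"
proof -
  interpret I: ideal "PIdl c" R using cgenideal_ideal[OF c] .
  have surj: "(+>) (PIdl c) ` carrier R = carrier (R Quot PIdl c)"
    unfolding FactRing_def A_RCOSETS_def' by auto
  have one: "\<one>\<^bsub>R Quot PIdl c\<^esub> = PIdl c +> \<one>"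
    unfolding FactRing_def by simp
  show ?thesis
    unfolding ring_hom_cring.stable_range_one_iff_surjective[OF I.rcos_ring_hom_cring[OF is_cring] surj]
      stable_range_one_mod_def one
    by (simp add: rcos_eq_one_iff_congruent_one c)
qed

lemma locally_stable_iff:
  "locally_stable R \<longleftrightarrow>
     (\<forall>a\<in>carrier R. \<forall>b\<in>carrier R.
        (\<exists>s\<in>carrier R. \<exists>t\<in>carrier R. s \<otimes> a \<oplus> t \<otimes> b = \<one>) \<longrightarrow>
        (\<exists>y\<in>carrier R. stable_range_one_mod R (a \<oplus> b \<otimes> y)))"
  unfolding locally_stable_def by (simp add: comaximal_iff stable_range_one_quotient_iff)

end

lemma corner_ops [simp]:
  "monoid.mult (corner R e) = monoid.mult R" "ring.add (corner R e) = ring.add R"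
  "ring.zero (corner R e) = ring.zero R" "monoid.one (corner R e) = e"
  by (simp_all add: corner_def)

context cring
begin

lemma carrier_corner:
  assumes e: "e \<in> carrier R" "e \<otimes> e = e"
  shows "carrier (corner R e) = {x \<in> carrier R. e \<otimes> x = x}"
proof (intro equalityI subsetI)
  fix z assume "z \<in> carrier (corner R e)"
  then obtain x where x: "x \<in> carrier R" "z = e \<otimes> x \<otimes> e"
    unfolding corner_def by auto
  have "e \<otimes> z = (e \<otimes> e) \<otimes> x \<otimes> e" unfolding x(2) using x(1) e(1) by algebra
  also have "\<dots> = z" by (simp only: e(2) x(2))
  finally have "e \<otimes> z = z" .
  moreover have "z \<in> carrier R" using x e by simp
  ultimately show "z \<in> {x \<in> carrier R. e \<otimes> x = x}" by blast
next
  fix z assume "z \<in> {x \<in> carrier R. e \<otimes> x = x}"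
  then have z: "z \<in> carrier R" "e \<otimes> z = z" by auto
  then have "e \<otimes> z \<otimes> e = e \<otimes> (e \<otimes> z)" using e(1) by algebra
  then have "z = e \<otimes> z \<otimes> e" using z by simp
  then show "z \<in> carrier (corner R e)"
    unfolding corner_def using z(1) by auto
qed

lemma cring_corner:
  assumes e: "e \<in> carrier R" "e \<otimes> e = e"
  shows "cring (corner R e)"
proof -
  have C: "x \<in> carrier (corner R e) \<longleftrightarrow> x \<in> carrier R \<and> e \<otimes> x = x" for x
    using carrier_corner[OF e] by blast
  have mult_closed: "e \<otimes> (x \<otimes> y) = x \<otimes> y" if "e \<otimes> x = x" "x \<in> carrier R" "y \<in> carrier R" for x y
    using that e m_assoc[of e x y] by simp
  show ?thesis
  proof (rule cringI)
    show "abelian_group (corner R e)"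
    proof (rule abelian_groupI)
      fix x assume "x \<in> carrier (corner R e)"
      then have "\<ominus> x \<in> carrier (corner R e)" "\<ominus> x \<oplus> x = \<zero>"
        using e(1) by (auto simp: C r_minus l_neg)
      then show "\<exists>y\<in>carrier (corner R e). y \<oplus>\<^bsub>corner R e\<^esub> x = \<zero>\<^bsub>corner R e\<^esub>"
        by auto
    qed (use e(1) in \<open>auto simp: C r_distr a_ac\<close>)
    show "comm_monoid (corner R e)"
      by (rule comm_monoidI) (use e in \<open>auto simp: C mult_closed m_ac\<close>)
  qed (simp add: C l_distr)
qed

end

locale complementary_idempotents = cring +
  fixes e f
  assumes e_closed [simp]: "e \<in> carrier R" and f_closed [simp]: "f \<in> carrier R"
    and e_plus_f: "e \<oplus> f = \<one>" and e_times_f: "e \<otimes> f = \<zero>"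
begin

lemma f_times_e: "f \<otimes> e = \<zero>"
  using e_times_f m_comm[of e f] by simp

lemma swap: "complementary_idempotents R f e"
  by unfold_locales (simp_all add: f_times_e a_comm[of f e] e_plus_f)

lemma e_idem: "e \<otimes> e = e"
proof -
  have "e \<otimes> e = e \<otimes> (e \<oplus> f)" by (simp add: r_distr e_times_f)
  then show ?thesis by (simp add: e_plus_f)
qed

lemma mem_corner_iff: "x \<in> carrier (corner R e) \<longleftrightarrow> x \<in> carrier R \<and> e \<otimes> x = x"
  using carrier_corner[OF e_closed e_idem] by blast

lemma corner_is_cring: "cring (corner R e)"
  using cring_corner[OF e_closed e_idem] .

lemma corner_projection_hom: "(\<otimes>) e \<in> ring_hom R (corner R e)"
proof (rule ring_hom_memI)
  show "e \<otimes> x \<in> carrier (corner R e)" if "x \<in> carrier R" for x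
    using that by (simp add: mem_corner_iff e_idem flip: m_assoc)
  show "e \<otimes> (x \<otimes> y) = e \<otimes> x \<otimes>\<^bsub>corner R e\<^esub> (e \<otimes> y)"
    if "x \<in> carrier R" "y \<in> carrier R" for x y
  proof -
    have "(e \<otimes> x) \<otimes> (e \<otimes> y) = (e \<otimes> e) \<otimes> (x \<otimes> y)" using that e_closed by algebra
    then show ?thesis by (simp add: e_idem)
  qed
  show "e \<otimes> (x \<oplus> y) = e \<otimes> x \<oplus>\<^bsub>corner R e\<^esub> e \<otimes> y"
    if "x \<in> carrier R" "y \<in> carrier R" for x y
    using that by (simp add: r_distr)
qed simp

lemma f_times_corner: "x \<in> carrier (corner R e) \<Longrightarrow> f \<otimes> x = \<zero>"
  using m_assoc[of f e x] by (simp add: mem_corner_iff f_times_e)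

lemma corner_times_e: "k \<in> carrier (corner R e) \<Longrightarrow> c \<in> carrier R \<Longrightarrow> k \<otimes> (e \<otimes> c) = k \<otimes> c"
  using m_assoc[of e k c] m_comm[of e] m_lcomm[of k e c] by (simp add: mem_corner_iff)

lemma e_times_mult: "x \<in> carrier R \<Longrightarrow> y \<in> carrier R \<Longrightarrow> e \<otimes> (x \<otimes> y) = (e \<otimes> x) \<otimes> (e \<otimes> y)"
  using ring_hom_mult[OF corner_projection_hom] by simp

lemma e_times_in_corner: "x \<in> carrier R \<Longrightarrow> e \<otimes> x \<in> carrier (corner R e)"
  using ring_hom_closed[OF corner_projection_hom] .

lemma e_times_stable_term:
  assumes "a \<in> carrier R" "b \<in> carrier R" "y \<in> carrier R" "u \<in> carrier R"
  shows "e \<otimes> ((a \<oplus> b \<otimes> y) \<otimes> u) = (e \<otimes> a \<oplus> (e \<otimes> b) \<otimes> (e \<otimes> y)) \<otimes> (e \<otimes> u)"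
  using assms by (simp add: e_times_mult r_distr)

lemma sum_of_components: "x \<in> carrier R \<Longrightarrow> x = e \<otimes> x \<oplus> f \<otimes> x"
  using l_distr[of e f x] by (simp add: e_plus_f)

lemma congruent_one_corner:
  "c \<in> carrier R \<Longrightarrow> x \<in> carrier R \<Longrightarrow> congruent_one R c x \<Longrightarrow>
    congruent_one (corner R e) (e \<otimes> c) (e \<otimes> x)"
  using congruent_one_ring_hom[OF corner_projection_hom] .

lemma congruent_one_of_corners:
  assumes c: "c \<in> carrier R" and x: "x \<in> carrier R"
    and "congruent_one (corner R e) (e \<otimes> c) (e \<otimes> x)"
    and "congruent_one (corner R f) (f \<otimes> c) (f \<otimes> x)"
  shows "congruent_one R c x"
proof -
  interpret F: complementary_idempotents R f e by (rule swap)
  obtain k1 where k1: "k1 \<in> carrier (corner R e)" "e \<otimes> x = e \<oplus> k1 \<otimes> (e \<otimes> c)"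
    using assms(3) unfolding congruent_one_def by auto
  obtain k2 where k2: "k2 \<in> carrier (corner R f)" "f \<otimes> x = f \<oplus> k2 \<otimes> (f \<otimes> c)"
    using assms(4) unfolding congruent_one_def by auto
  have k: "k1 \<in> carrier R" "k2 \<in> carrier R"
    using k1(1) k2(1) mem_corner_iff F.mem_corner_iff by auto
  have "x = e \<otimes> x \<oplus> f \<otimes> x" using sum_of_components[OF x] .
  also have "\<dots> = (e \<oplus> k1 \<otimes> c) \<oplus> (f \<oplus> k2 \<otimes> c)"
    using k1 k2 corner_times_e[OF k1(1) c] F.corner_times_e[OF k2(1) c] by simp
  also have "\<dots> = (e \<oplus> f) \<oplus> (k1 \<oplus> k2) \<otimes> c"
    using k c e_closed f_closed by algebra
  finally have "x = \<one> \<oplus> (k1 \<oplus> k2) \<otimes> c" by (simp add: e_plus_f)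
  then show ?thesis
    unfolding congruent_one_def using k by blast
qed

lemma e_times_plus_f: "z \<in> carrier (corner R e) \<Longrightarrow> e \<otimes> (z \<oplus> f) = z"
  by (simp add: mem_corner_iff r_distr e_times_f)

lemma lift_combination:
  assumes "s \<in> carrier (corner R e)" "a \<in> carrier (corner R e)" "t \<in> carrier R" "b \<in> carrier R"
  shows "(s \<oplus> f) \<otimes> (a \<oplus> f) \<oplus> t \<otimes> b = (s \<otimes> a \<oplus> t \<otimes> b) \<oplus> f"
proof -
  interpret F: complementary_idempotents R f e by (rule swap)
  have "s \<in> carrier R" "a \<in> carrier R" using assms by (simp_all add: mem_corner_iff)
  then have "(s \<oplus> f) \<otimes> (a \<oplus> f) \<oplus> t \<otimes> b = (s \<otimes> a \<oplus> t \<otimes> b) \<oplus> (f \<otimes> s \<oplus> f \<otimes> a \<oplus> f \<otimes> f)"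
    using assms(3,4) f_closed by algebra
  then show ?thesis
    using assms by (simp add: f_times_corner F.e_idem mem_corner_iff)
qed

lemma stable_range_one_mod_corner:
  assumes c: "c \<in> carrier R" and sr: "stable_range_one_mod R c"
  shows "stable_range_one_mod (corner R e) (e \<otimes> c)"
  unfolding stable_range_one_mod_def corner_ops
proof (intro ballI impI)
  interpret F: complementary_idempotents R f e by (rule swap)
  interpret E: cring "corner R e" by (rule corner_is_cring)
  fix a b assume a: "a \<in> carrier (corner R e)" and b: "b \<in> carrier (corner R e)"
  assume "\<exists>s\<in>carrier (corner R e). \<exists>t\<in>carrier (corner R e).
    congruent_one (corner R e) (e \<otimes> c) (s \<otimes> a \<oplus> t \<otimes> b)"
  then obtain s t where s: "s \<in> carrier (corner R e)" and t: "t \<in> carrier (corner R e)"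
    and st: "congruent_one (corner R e) (e \<otimes> c) (s \<otimes> a \<oplus> t \<otimes> b)" by blast
  have z: "s \<otimes> a \<oplus> t \<otimes> b \<in> carrier (corner R e)"
    using E.a_closed E.m_closed a b s t by simp
  have in_R: "a \<in> carrier R" "b \<in> carrier R" "s \<in> carrier R" "t \<in> carrier R"
    using a b s t by (simp_all add: mem_corner_iff)
  note lifted = lift_combination[OF s a in_R(4,2)]
  have "congruent_one R c ((s \<oplus> f) \<otimes> (a \<oplus> f) \<oplus> t \<otimes> b)"
  proof (rule congruent_one_of_corners)
    show "congruent_one (corner R e) (e \<otimes> c) (e \<otimes> ((s \<oplus> f) \<otimes> (a \<oplus> f) \<oplus> t \<otimes> b))"
      using st by (simp only: lifted e_times_plus_f[OF z])
    have "f \<otimes> ((s \<oplus> f) \<otimes> (a \<oplus> f) \<oplus> t \<otimes> b) = f"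
      unfolding lifted using z by (simp add: r_distr f_times_corner F.e_idem mem_corner_iff)
    then show "congruent_one (corner R f) (f \<otimes> c) (f \<otimes> ((s \<oplus> f) \<otimes> (a \<oplus> f) \<oplus> t \<otimes> b))"
      using cring.axioms(1)[OF F.corner_is_cring, THEN ring.congruent_one_one, of "f \<otimes> c"] c
      by (simp add: F.e_times_in_corner)
  qed (use c in_R in simp_all)
  then have "\<exists>s'\<in>carrier R. \<exists>t'\<in>carrier R. congruent_one R c (s' \<otimes> (a \<oplus> f) \<oplus> t' \<otimes> b)"
    using in_R by (intro bexI[of _ "s \<oplus> f"] bexI[of _ t]) simp_all
  moreover have "a \<oplus> f \<in> carrier R" using in_R by simp
  ultimately obtain y u where y: "y \<in> carrier R" and u: "u \<in> carrier R"
    and "congruent_one R c ((a \<oplus> f \<oplus> b \<otimes> y) \<otimes> u)"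
    using stable_range_one_modD[OF sr _ in_R(2)] by blast
  then have "congruent_one (corner R e) (e \<otimes> c) (e \<otimes> ((a \<oplus> f \<oplus> b \<otimes> y) \<otimes> u))"
    using c in_R by (intro congruent_one_corner) simp_all
  moreover have "e \<otimes> ((a \<oplus> f \<oplus> b \<otimes> y) \<otimes> u) = (a \<oplus> b \<otimes> (e \<otimes> y)) \<otimes> (e \<otimes> u)"
    using e_times_stable_term[of "a \<oplus> f" b y u] in_R y u a b
    by (simp add: e_times_plus_f mem_corner_iff)
  ultimately show "\<exists>y\<in>carrier (corner R e). \<exists>u\<in>carrier (corner R e).
      congruent_one (corner R e) (e \<otimes> c) ((a \<oplus> b \<otimes> y) \<otimes> u)"
    using e_times_in_corner y u by auto
qed

lemma corner_stable_range_witness: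
  assumes "c \<in> carrier R" "a \<in> carrier R" "b \<in> carrier R" "s \<in> carrier R" "t \<in> carrier R"
    and sr: "stable_range_one_mod (corner R e) (e \<otimes> c)"
    and "congruent_one R c (s \<otimes> a \<oplus> t \<otimes> b)"
  shows "\<exists>y\<in>carrier (corner R e). \<exists>u\<in>carrier (corner R e).
    congruent_one (corner R e) (e \<otimes> c) (e \<otimes> ((a \<oplus> b \<otimes> y) \<otimes> u))"
proof -
  have "congruent_one (corner R e) (e \<otimes> c) (e \<otimes> (s \<otimes> a \<oplus> t \<otimes> b))"
    using assms by (intro congruent_one_corner) simp_all
  then have "\<exists>s'\<in>carrier (corner R e). \<exists>t'\<in>carrier (corner R e).
      congruent_one (corner R e) (e \<otimes> c) (s' \<otimes> (e \<otimes> a) \<oplus> t' \<otimes> (e \<otimes> b))"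
    using assms by (intro bexI[of _ "e \<otimes> s"] bexI[of _ "e \<otimes> t"])
      (simp_all add: r_distr e_times_mult e_times_in_corner)
  then have "\<exists>y\<in>carrier (corner R e). \<exists>u\<in>carrier (corner R e).
      congruent_one (corner R e) (e \<otimes> c) ((e \<otimes> a \<oplus> (e \<otimes> b) \<otimes> y) \<otimes> u)"
    using stable_range_one_modD[OF sr e_times_in_corner e_times_in_corner] assms by simp
  moreover have "e \<otimes> ((a \<oplus> b \<otimes> y) \<otimes> u) = (e \<otimes> a \<oplus> (e \<otimes> b) \<otimes> y) \<otimes> u"
    if "y \<in> carrier (corner R e)" "u \<in> carrier (corner R e)" for y u
    using that assms e_times_stable_term[of a b y u] by (simp add: mem_corner_iff)
  ultimately show ?thesis by auto
qed

lemma stable_range_one_mod_of_corners: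
  assumes c: "c \<in> carrier R"
    and sr_e: "stable_range_one_mod (corner R e) (e \<otimes> c)"
    and sr_f: "stable_range_one_mod (corner R f) (f \<otimes> c)"
  shows "stable_range_one_mod R c"
  unfolding stable_range_one_mod_def
proof (intro ballI impI)
  interpret F: complementary_idempotents R f e by (rule swap)
  fix a b assume a: "a \<in> carrier R" and b: "b \<in> carrier R"
  assume "\<exists>s\<in>carrier R. \<exists>t\<in>carrier R. congruent_one R c (s \<otimes> a \<oplus> t \<otimes> b)"
  then obtain s t where st: "s \<in> carrier R" "t \<in> carrier R" "congruent_one R c (s \<otimes> a \<oplus> t \<otimes> b)"
    by blast
  obtain y1 u1 where y1: "y1 \<in> carrier (corner R e)" and u1: "u1 \<in> carrier (corner R e)"
    and cong_e: "congruent_one (corner R e) (e \<otimes> c) (e \<otimes> ((a \<oplus> b \<otimes> y1) \<otimes> u1))"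
    using corner_stable_range_witness[OF c a b st(1,2) sr_e st(3)] by blast
  obtain y2 u2 where y2: "y2 \<in> carrier (corner R f)" and u2: "u2 \<in> carrier (corner R f)"
    and cong_f: "congruent_one (corner R f) (f \<otimes> c) (f \<otimes> ((a \<oplus> b \<otimes> y2) \<otimes> u2))"
    using F.corner_stable_range_witness[OF c a b st(1,2) sr_f st(3)] by blast
  have in_R: "y1 \<in> carrier R" "u1 \<in> carrier R" "y2 \<in> carrier R" "u2 \<in> carrier R"
    using y1 u1 y2 u2 by (simp_all add: mem_corner_iff F.mem_corner_iff)
  have "e \<otimes> (y1 \<oplus> y2) = e \<otimes> y1" "e \<otimes> (u1 \<oplus> u2) = e \<otimes> u1"
    using in_R F.f_times_corner[OF y2] F.f_times_corner[OF u2] by (simp_all add: r_distr)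
  then have "e \<otimes> ((a \<oplus> b \<otimes> (y1 \<oplus> y2)) \<otimes> (u1 \<oplus> u2)) = e \<otimes> ((a \<oplus> b \<otimes> y1) \<otimes> u1)"
    using a b in_R by (simp add: e_times_stable_term)
  moreover have "f \<otimes> (y1 \<oplus> y2) = f \<otimes> y2" "f \<otimes> (u1 \<oplus> u2) = f \<otimes> u2"
    using in_R f_times_corner[OF y1] f_times_corner[OF u1] by (simp_all add: r_distr)
  then have "f \<otimes> ((a \<oplus> b \<otimes> (y1 \<oplus> y2)) \<otimes> (u1 \<oplus> u2)) = f \<otimes> ((a \<oplus> b \<otimes> y2) \<otimes> u2)"
    using a b in_R by (simp add: F.e_times_stable_term)
  ultimately have "congruent_one R c ((a \<oplus> b \<otimes> (y1 \<oplus> y2)) \<otimes> (u1 \<oplus> u2))"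
    using cong_e cong_f a b c in_R by (intro congruent_one_of_corners) simp_all
  then show "\<exists>y\<in>carrier R. \<exists>u\<in>carrier R. congruent_one R c ((a \<oplus> b \<otimes> y) \<otimes> u)"
    using in_R by blast
qed

lemma locally_stable_corner:
  assumes ls: "locally_stable R"
  shows "locally_stable (corner R e)"
  unfolding cring.locally_stable_iff[OF corner_is_cring] corner_ops
proof (intro ballI impI)
  fix a b assume a: "a \<in> carrier (corner R e)" and b: "b \<in> carrier (corner R e)"
  assume "\<exists>s\<in>carrier (corner R e). \<exists>t\<in>carrier (corner R e). s \<otimes> a \<oplus> t \<otimes> b = e"
  then obtain s t where s: "s \<in> carrier (corner R e)" and t: "t \<in> carrier (corner R e)"
    and st: "s \<otimes> a \<oplus> t \<otimes> b = e" by blast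
  have in_R: "a \<in> carrier R" "b \<in> carrier R" "s \<in> carrier R" "t \<in> carrier R"
    using a b s t by (simp_all add: mem_corner_iff)
  have "\<exists>s'\<in>carrier R. \<exists>t'\<in>carrier R. s' \<otimes> (a \<oplus> f) \<oplus> t' \<otimes> b = \<one>"
    using in_R lift_combination[OF s a in_R(4,2)]
    by (intro bexI[of _ "s \<oplus> f"] bexI[of _ t]) (simp_all add: st e_plus_f)
  then obtain y where y: "y \<in> carrier R" and sr: "stable_range_one_mod R (a \<oplus> f \<oplus> b \<otimes> y)"
    using ls[unfolded locally_stable_iff, rule_format, of "a \<oplus> f" b] in_R by auto
  have "stable_range_one_mod (corner R e) (e \<otimes> (a \<oplus> f \<oplus> b \<otimes> y))"
    using stable_range_one_mod_corner[OF _ sr] y in_R by simp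
  moreover have "e \<otimes> (a \<oplus> f \<oplus> b \<otimes> y) = a \<oplus> b \<otimes> (e \<otimes> y)"
    using a b y in_R by (simp add: r_distr e_times_f e_times_mult mem_corner_iff)
  ultimately show "\<exists>y\<in>carrier (corner R e). stable_range_one_mod (corner R e) (a \<oplus> b \<otimes> y)"
    using e_times_in_corner[OF y] by auto
qed

lemma corner_locally_stable_witness:
  assumes ls: "locally_stable (corner R e)" and a: "a \<in> carrier R" and b: "b \<in> carrier R"
    and "\<exists>s\<in>carrier R. \<exists>t\<in>carrier R. s \<otimes> a \<oplus> t \<otimes> b = \<one>"
  shows "\<exists>y\<in>carrier (corner R e). stable_range_one_mod (corner R e) (e \<otimes> (a \<oplus> b \<otimes> y))"
proof -
  obtain s t where s: "s \<in> carrier R" and t: "t \<in> carrier R" and st: "s \<otimes> a \<oplus> t \<otimes> b = \<one>"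
    using assms(4) by blast
  have "\<exists>s'\<in>carrier (corner R e). \<exists>t'\<in>carrier (corner R e). s' \<otimes> (e \<otimes> a) \<oplus> t' \<otimes> (e \<otimes> b) = e"
    using s t a b arg_cong[OF st, of "(\<otimes>) e"]
    by (intro bexI[of _ "e \<otimes> s"] bexI[of _ "e \<otimes> t"]) (simp_all add: r_distr e_times_mult e_times_in_corner)
  then obtain y where y: "y \<in> carrier (corner R e)"
    and sr: "stable_range_one_mod (corner R e) (e \<otimes> a \<oplus> (e \<otimes> b) \<otimes> y)"
    using ls[unfolded cring.locally_stable_iff[OF corner_is_cring] corner_ops, rule_format,
        OF e_times_in_corner[OF a] e_times_in_corner[OF b]] by blast
  moreover have "e \<otimes> (a \<oplus> b \<otimes> y) = e \<otimes> a \<oplus> (e \<otimes> b) \<otimes> y"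
    using a b y by (simp add: r_distr e_times_mult mem_corner_iff)
  ultimately show ?thesis by (intro bexI[of _ y]) simp_all
qed

lemma locally_stable_of_corners:
  assumes ls_e: "locally_stable (corner R e)" and ls_f: "locally_stable (corner R f)"
  shows "locally_stable R"
  unfolding locally_stable_iff
proof (intro ballI impI)
  interpret F: complementary_idempotents R f e by (rule swap)
  fix a b assume a: "a \<in> carrier R" and b: "b \<in> carrier R"
    and comax: "\<exists>s\<in>carrier R. \<exists>t\<in>carrier R. s \<otimes> a \<oplus> t \<otimes> b = \<one>"
  obtain y1 where y1: "y1 \<in> carrier (corner R e)"
    and sr_e: "stable_range_one_mod (corner R e) (e \<otimes> (a \<oplus> b \<otimes> y1))"
    using corner_locally_stable_witness[OF ls_e a b comax] by blast
  obtain y2 where y2: "y2 \<in> carrier (corner R f)"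
    and sr_f: "stable_range_one_mod (corner R f) (f \<otimes> (a \<oplus> b \<otimes> y2))"
    using F.corner_locally_stable_witness[OF ls_f a b comax] by blast
  have in_R: "y1 \<in> carrier R" "y2 \<in> carrier R"
    using y1 y2 by (simp_all add: mem_corner_iff F.mem_corner_iff)
  have "e \<otimes> (y1 \<oplus> y2) = e \<otimes> y1" "f \<otimes> (y1 \<oplus> y2) = f \<otimes> y2"
    using in_R F.f_times_corner[OF y2] f_times_corner[OF y1] by (simp_all add: r_distr)
  then have "e \<otimes> (a \<oplus> b \<otimes> (y1 \<oplus> y2)) = e \<otimes> (a \<oplus> b \<otimes> y1)"
    and "f \<otimes> (a \<oplus> b \<otimes> (y1 \<oplus> y2)) = f \<otimes> (a \<oplus> b \<otimes> y2)"
    using a b in_R by (simp_all add: r_distr e_times_mult F.e_times_mult)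
  then have "stable_range_one_mod R (a \<oplus> b \<otimes> (y1 \<oplus> y2))"
    using sr_e sr_f a b in_R by (intro stable_range_one_mod_of_corners) simp_all
  then show "\<exists>y\<in>carrier R. stable_range_one_mod R (a \<oplus> b \<otimes> y)"
    using in_R by blast
qed

lemma locally_stable_iff_corners:
  "locally_stable R \<longleftrightarrow> locally_stable (corner R e) \<and> locally_stable (corner R f)"
  using locally_stable_corner complementary_idempotents.locally_stable_corner[OF swap]
    locally_stable_of_corners by blast

end

theorem corollary2p8:
  fixes R (structure) and e :: 'a
  assumes "cring R"
    and "e \<in> carrier R"
    and "e \<otimes> e = e"
  shows "locally_stable R \<longleftrightarrow>
           locally_stable (corner R e) \<and> locally_stable (corner R (\<one> \<ominus> e))"
proof -
  interpret cring R by fact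
  have "e \<otimes> (\<one> \<ominus> e) = e \<ominus> e \<otimes> e" "e \<oplus> (\<one> \<ominus> e) = \<one>"
    using assms(2) by algebra+
  then interpret complementary_idempotents R e "\<one> \<ominus> e"
    using assms(2,3) by unfold_locales (simp_all add: r_neg)
  show ?thesis by (rule locally_stable_iff_corners)
qed

end
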